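(* Let $\Delta,k\in\mathbb{N}$ with $k>6\Delta$. Let $G$ be a graph and $x\in V(G)$ such that $\delta(G-x)\ge (2/3-1/(6\Delta))k$ and $G-x$ is bipartite with parts $Y_1,Y_2$. If $x$ has at least $\Delta$ neighbours in $Y_1$ and at least $\Delta$ neighbours in $Y_2$, then $G$ contains a copy of every tree $T$ with $k$ edges and $\Delta(T)\le\Delta$.
   Context: Graphs are finite and simple; $\delta$ denotes minimum degree. "Contains a copy of $T$" means has a subgraph isomorphic to $T$. *)

theory Defs
  imports Complex_Main
begin

definition sgraph :: "'a set \<Rightarrow> ('a \<Rightarrow> 'a \<Rightarrow> bool) \<Rightarrow> bool" where
  "sgraph V E \<longleftrightarrow> finite V \<and>
     (\<forall>u v. E u v \<longrightarrow> u \<in> V \<and> v \<in> V \<and> u \<noteq> v \<and> E v u)"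

definition nbrs :: "'a set \<Rightarrow> ('a \<Rightarrow> 'a \<Rightarrow> bool) \<Rightarrow> 'a \<Rightarrow> 'a set" where
  "nbrs V E v = {u \<in> V. E v u}"

definition degree :: "'a set \<Rightarrow> ('a \<Rightarrow> 'a \<Rightarrow> bool) \<Rightarrow> 'a \<Rightarrow> nat" where
  "degree V E v = card (nbrs V E v)"

definition edges :: "'a set \<Rightarrow> ('a \<Rightarrow> 'a \<Rightarrow> bool) \<Rightarrow> 'a set set" where
  "edges V E = {{u, v} | u v. u \<in> V \<and> v \<in> V \<and> E u v}"

definition max_degree_le :: "'a set \<Rightarrow> ('a \<Rightarrow> 'a \<Rightarrow> bool) \<Rightarrow> nat \<Rightarrow> bool" where
  "max_degree_le V E d \<longleftrightarrow> (\<forall>v\<in>V. degree V E v \<le> d)"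

definition connected_graph :: "'a set \<Rightarrow> ('a \<Rightarrow> 'a \<Rightarrow> bool) \<Rightarrow> bool" where
  "connected_graph V E \<longleftrightarrow>
     (\<forall>u\<in>V. \<forall>v\<in>V. (\<lambda>a b. a \<in> V \<and> b \<in> V \<and> E a b)\<^sup>*\<^sup>* u v)"

definition has_cycle :: "'a set \<Rightarrow> ('a \<Rightarrow> 'a \<Rightarrow> bool) \<Rightarrow> bool" where
  "has_cycle V E \<longleftrightarrow> (\<exists>cs. length cs \<ge> 3 \<and> distinct cs \<and> set cs \<subseteq> V \<and>
      (\<forall>i. Suc i < length cs \<longrightarrow> E (cs ! i) (cs ! Suc i)) \<and> E (last cs) (hd cs))"

definition is_tree :: "'a set \<Rightarrow> ('a \<Rightarrow> 'a \<Rightarrow> bool) \<Rightarrow> bool" where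
  "is_tree V E \<longleftrightarrow> sgraph V E \<and> V \<noteq> {} \<and> connected_graph V E \<and> \<not> has_cycle V E"

definition contains_copy ::
  "'a set \<Rightarrow> ('a \<Rightarrow> 'a \<Rightarrow> bool) \<Rightarrow> 'b set \<Rightarrow> ('b \<Rightarrow> 'b \<Rightarrow> bool) \<Rightarrow> bool" where
  "contains_copy V E VH EH \<longleftrightarrow> (\<exists>f. inj_on f VH \<and> f ` VH \<subseteq> V \<and>
      (\<forall>u\<in>VH. \<forall>v\<in>VH. EH u v \<longrightarrow> E (f u) (f v)))"

definition bipartite_parts :: "'a set \<Rightarrow> ('a \<Rightarrow> 'a \<Rightarrow> bool) \<Rightarrow> 'a set \<Rightarrow> 'a set \<Rightarrow> bool" where
  "bipartite_parts V E Y1 Y2 \<longleftrightarrow> Y1 \<union> Y2 = V \<and> Y1 \<inter> Y2 = {} \<and>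
     (\<forall>u\<in>Y1. \<forall>v\<in>Y1. \<not> E u v) \<and> (\<forall>u\<in>Y2. \<forall>v\<in>Y2. \<not> E u v)"

end

theory Submission
  imports Defs
begin

text \<open>Let d = \<lceil>(2/3 - 1/(6\<Delta>)) k\<rceil>, so that every vertex of G - x has degree at least d.
  Suppose some vertex v of T is such that T - v has a proper 2-colouring with both colour classes
  of size at most d. Then T embeds greedily: v goes to x, its neighbours to distinct neighbours of x
  in Y1 or Y2 according to their colour, and every further vertex, in order of depth below v, to an
  unused neighbour of its parent's image. Such a neighbour exists because the parent's image has at
  least d neighbours, all on the side of the vertex's colour, while fewer than d vertices of that
  colour have been placed.

  To find v, 2-colour T by depth parity from a root, with class sizes nB \<ge> nA. If nB \<le> d the root
  will do. Otherwise let u be a deepest vertex whose subtree has colour imbalance (vertices of the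
  larger class minus vertices of the smaller) above d - nA. The subtrees of the children
  of u have imbalance at most d - nA each and at least d - nA in total, so some of them have total
  imbalance between nB - d and d - nA; this window is wide enough for a greedy choice because
  nB \<le> \<Delta> nA + 1 and k > 6\<Delta>. Swapping the colours inside these subtrees brings both classes down
  to at most d and only breaks edges at u, so v = u works.\<close>

text \<open>Adding the elements one at a time, the partial sum stays below L until it first lands in
  [L, H]: a sum below L plus an element below L is at most 2L - 2.\<close>
lemma subset_sum_between_aux:
  fixes g :: "'c \<Rightarrow> int"
  assumes "finite P" "\<forall>c\<in>P. 0 < g c \<and> g c \<le> H" "0 \<le> H" "2 * L - 2 \<le> H"
  shows "sum g P < L \<or> (\<exists>J\<subseteq>P. L \<le> sum g J \<and> sum g J \<le> H)"
  using assms
proof (induction P rule: finite_induct)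
  case (insert a P)
  show ?case
  proof (cases "\<exists>J\<subseteq>P. L \<le> sum g J \<and> sum g J \<le> H")
    case False
    then have "sum g P < L" using insert by auto
    have "g a \<le> H" using insert.prems by auto
    show ?thesis
    proof (cases "L \<le> g a")
      case True
      then show ?thesis using \<open>g a \<le> H\<close> by (intro disjI2 exI[of _ "{a}"]) auto
    next
      case False
      then have "sum g (insert a P) \<le> H"
        using \<open>sum g P < L\<close> insert.hyps insert.prems(3) by simp
      show ?thesis
      proof (cases "sum g (insert a P) < L")
        case False
        then show ?thesis using \<open>sum g (insert a P) \<le> H\<close> by (intro disjI2 exI[of _ "insert a P"]) simp
      qed (rule disjI1)
    qed
  qed blast
qed auto

lemma exists_subset_sum_between:
  fixes g :: "'c \<Rightarrow> int"
  assumes "finite C" "\<forall>c\<in>C. g c \<le> H" "0 \<le> H" "2 * L - 2 \<le> H" "L \<le> sum g {c\<in>C. 0 < g c}"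
  shows "\<exists>J\<subseteq>C. L \<le> sum g J \<and> sum g J \<le> H"
proof -
  have "\<not> sum g {c\<in>C. 0 < g c} < L" using assms(5) by simp
  moreover have "finite {c\<in>C. 0 < g c}" "\<forall>c\<in>{c\<in>C. 0 < g c}. 0 < g c \<and> g c \<le> H"
    using assms(1,2) by auto
  ultimately obtain J where "J \<subseteq> {c\<in>C. 0 < g c}" "L \<le> sum g J" "sum g J \<le> H"
    using subset_sum_between_aux[of "{c\<in>C. 0 < g c}" g H L] assms(3,4) by blast
  then show ?thesis by blast
qed

lemma split_bounds_arith:
  fixes d k nA nB \<delta> :: int
  assumes d: "2 \<le> d" and n: "nA + nB = k + 1" and k: "6 * d < k"
    and \<delta>: "4 * d * k \<le> 6 * d * \<delta> + k" and nB: "nB - 1 \<le> d * nA" and nA: "0 \<le> nA"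
  shows "k + 1 \<le> 2 * \<delta>" "2 * nB + nA - 2 \<le> 3 * \<delta>"
proof -
  have "0 < (2 * d - 2) * k" using d k by simp
  then have "6 * d * k < 6 * d * (2 * \<delta>)" using \<delta> by (simp add: algebra_simps)
  then show "k + 1 \<le> 2 * \<delta>" using d by (simp add: mult_less_cancel_left)
  have "nA \<le> d * nA" using mult_right_mono[of 1 d nA] d nA by simp
  moreover have "3 * (4 * d * k - k) - 6 * d * (2 * nB + nA - 2) = 6 * (d * nA) - 3 * nA - 3 * nB + 3"
    using n by (simp add: algebra_simps flip: eq_diff_eq)
  ultimately have "6 * d * (2 * nB + nA - 2) \<le> 3 * (4 * d * k - k)" using nB by linarith
  also have "\<dots> \<le> 6 * d * (3 * \<delta>)" using \<delta> by simp
  finally show "2 * nB + nA - 2 \<le> 3 * \<delta>" using d by (simp add: mult_le_cancel_left)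
qed

lemma threshold_arith:
  fixes \<Delta> k :: nat
  assumes "1 \<le> \<Delta>"
  shows "4 * \<Delta> * k \<le> 6 * \<Delta> * nat \<lceil>(2/3 - 1 / (6 * real \<Delta>)) * real k\<rceil> + k"
proof -
  define t where "t = (2/3 - 1 / (6 * real \<Delta>)) * real k"
  have "4 * real \<Delta> * real k - real k = 6 * real \<Delta> * t" using assms by (simp add: t_def field_simps)
  also have "\<dots> \<le> 6 * real \<Delta> * real (nat \<lceil>t\<rceil>)"
    using real_nat_ceiling_ge[of t] by (intro mult_left_mono) auto
  finally have "real (4 * \<Delta> * k) \<le> real (6 * \<Delta> * nat \<lceil>t\<rceil> + k)" by simp
  then show ?thesis unfolding t_def by (simp only: of_nat_le_iff)
qed

definition imbalance :: "('b \<Rightarrow> bool) \<Rightarrow> 'b set \<Rightarrow> int" where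
  "imbalance c A = (\<Sum>y\<in>A. if c y then 1 else -1)"

lemma imbalance_eq_card:
  assumes "finite A"
  shows "imbalance c A = int (card {y\<in>A. c y}) - int (card {y\<in>A. \<not> c y})"
  using assms by (simp add: imbalance_def sum.If_cases Int_def)

lemma card_recolour:
  assumes "finite S" "U \<subseteq> S"
  shows "int (card {y\<in>S. c y \<noteq> (y \<in> U)}) = int (card {y\<in>S. c y}) - imbalance c U"
proof -
  have fin: "finite U" using assms finite_subset by blast
  have "{y\<in>S. c y \<noteq> (y \<in> U)} = {y\<in>S - U. c y} \<union> {y\<in>U. \<not> c y}"
    and "{y\<in>S. c y} = {y\<in>S - U. c y} \<union> {y\<in>U. c y}" using assms(2) by auto
  then show ?thesis
    using assms fin by (simp add: imbalance_eq_card card_Un_disjoint disjoint_iff)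
qed

lemma imbalance_not: "imbalance (\<lambda>y. \<not> c y) A = - imbalance c A"
  unfolding imbalance_def by (subst sum_negf[symmetric]) (rule sum.cong; simp)

lemma card_class_partition:
  "finite A \<Longrightarrow> card {y\<in>A. c y} + card {y\<in>A. \<not> c y} = card A"
  by (subst card_Un_disjoint[symmetric]) (auto intro: arg_cong[where f = card])

lemma exists_inj_into_parts:
  assumes "finite A" "finite B1" "finite B2" "B1 \<inter> B2 = {}"
    and "card A \<le> card B1" "card A \<le> card B2"
  obtains g where "inj_on g A" "\<And>y. y \<in> A \<Longrightarrow> g y \<in> (if c y then B1 else B2)"
proof -
  have "card {y\<in>A. c y} \<le> card B1" "card {y\<in>A. \<not> c y} \<le> card B2"
    using assms(5,6) card_mono[OF assms(1), of "{y\<in>A. c y}"] card_mono[OF assms(1), of "{y\<in>A. \<not> c y}"]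
    by auto
  moreover have "finite {y\<in>A. c y}" "finite {y\<in>A. \<not> c y}" using assms(1) by auto
  ultimately obtain g1 g2 where g1: "inj_on g1 {y\<in>A. c y}" "g1 ` {y\<in>A. c y} \<subseteq> B1"
    and g2: "inj_on g2 {y\<in>A. \<not> c y}" "g2 ` {y\<in>A. \<not> c y} \<subseteq> B2"
    using card_le_inj assms(2,3) by meson
  define g where "g y = (if c y then g1 y else g2 y)" for y
  have g_part: "g y \<in> (if c y then B1 else B2)" if "y \<in> A" for y
    using that g1(2) g2(2) by (auto simp: g_def)
  moreover have "inj_on g A"
  proof (rule inj_onI)
    fix a b assume ab: "a \<in> A" "b \<in> A" "g a = g b"
    then have "c a = c b" using g_part[of a] g_part[of b] assms(4) by (auto split: if_splits)
    with ab show "a = b" using g1(1) g2(1) by (auto simp: g_def inj_on_def)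
  qed
  ultimately show ?thesis using that by blast
qed

definition proper_colouring_on :: "'b set \<Rightarrow> ('b \<Rightarrow> 'b \<Rightarrow> bool) \<Rightarrow> ('b \<Rightarrow> bool) \<Rightarrow> bool" where
  "proper_colouring_on A ET c \<longleftrightarrow> (\<forall>a\<in>A. \<forall>b\<in>A. ET a b \<longrightarrow> c a \<noteq> c b)"

lemma proper_colouring_on_subset:
  "proper_colouring_on A ET c \<Longrightarrow> B \<subseteq> A \<Longrightarrow> proper_colouring_on B ET c"
  unfolding proper_colouring_on_def by blast

definition path_in :: "('b \<Rightarrow> 'b \<Rightarrow> bool) \<Rightarrow> 'b list \<Rightarrow> bool" where
  "path_in ET cs \<longleftrightarrow> distinct cs \<and> (\<forall>i. Suc i < length cs \<longrightarrow> ET (cs ! i) (cs ! Suc i))"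

lemma path_in_snoc:
  assumes "path_in ET cs" "cs \<noteq> []" "y \<notin> set cs" "ET (last cs) y"
  shows "path_in ET (cs @ [y])"
  unfolding path_in_def
proof (intro conjI allI impI)
  show "distinct (cs @ [y])" using assms(1,3) by (simp add: path_in_def)
  fix i assume i: "Suc i < length (cs @ [y])"
  show "ET ((cs @ [y]) ! i) ((cs @ [y]) ! Suc i)"
  proof (cases "Suc i < length cs")
    case True then show ?thesis using assms(1) by (simp add: path_in_def nth_append)
  next
    case False
    then have "Suc i = length cs" using i by simp
    then show ?thesis using assms(2,4) by (simp add: nth_append last_conv_nth flip: \<open>Suc i = length cs\<close>)
  qed
qed

lemma path_back_edge_has_cycle:
  assumes "path_in ET cs" "set cs \<subseteq> V" "i + 2 < length cs" "ET (last cs) (cs ! i)"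
  shows "has_cycle V ET"
  unfolding has_cycle_def
proof (intro exI[of _ "drop i cs"] conjI allI impI)
  show "3 \<le> length (drop i cs)" "distinct (drop i cs)" "set (drop i cs) \<subseteq> V"
    using assms(1-3) set_drop_subset[of i cs] by (auto simp: path_in_def)
  show "ET (last (drop i cs)) (hd (drop i cs))"
    using assms(3,4) by (simp add: hd_drop_conv_nth)
  fix j assume "Suc j < length (drop i cs)"
  then show "ET (drop i cs ! j) (drop i cs ! Suc j)"
    using assms(1) by (simp add: path_in_def)
qed

lemma maximal_path_ends_in_leaf:
  assumes sg: "sgraph VT ET" and acyclic: "\<not> has_cycle VT ET"
    and path: "path_in ET cs" "set cs \<subseteq> VT" "2 \<le> length cs"
    and maximal: "\<And>y. ET (last cs) y \<Longrightarrow> y \<in> set cs"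
    and y: "ET (last cs) y"
  shows "y = cs ! (length cs - 2)"
proof -
  define m where "m = length cs"
  obtain i where i: "i < m" "y = cs ! i" using maximal[OF y] by (auto simp: in_set_conv_nth m_def)
  have "cs \<noteq> []" using path(3) by auto
  then have "last cs = cs ! (m - 1)" by (simp add: m_def last_conv_nth)
  then have "i \<noteq> m - 1" using y i sg by (auto simp: sgraph_def)
  moreover have "\<not> i + 2 < m" using path_back_edge_has_cycle[OF path(1,2), of i] acyclic y i by (auto simp: m_def)
  ultimately have "i = m - 2" using i(1) by linarith
  then show ?thesis using i by (simp add: m_def)
qed

lemma tree_has_leaf:
  assumes T: "is_tree VT ET" and r: "r \<in> VT" and two: "card VT \<ge> 2"
  obtains l p where "l \<in> VT" "l \<noteq> r" "ET l p" "\<And>z. ET l z \<Longrightarrow> z = p"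
proof -
  have sg: "sgraph VT ET" and con: "connected_graph VT ET" and acyclic: "\<not> has_cycle VT ET"
    using T by (auto simp: is_tree_def)
  have fin: "finite VT" and edge_in: "\<And>a b. ET a b \<Longrightarrow> a \<in> VT \<and> b \<in> VT"
    and irrefl: "\<And>a b. ET a b \<Longrightarrow> a \<noteq> b" using sg by (auto simp: sgraph_def)
  define P where "P cs \<longleftrightarrow> path_in ET cs \<and> cs \<noteq> [] \<and> hd cs = r \<and> set cs \<subseteq> VT" for cs
  obtain w where "w \<in> VT" "w \<noteq> r"
    using two r by (metis card_le_Suc0_iff_eq fin not_less_eq_eq numeral_2_eq_2)
  then have "(\<lambda>a b. a \<in> VT \<and> b \<in> VT \<and> ET a b)\<^sup>*\<^sup>* r w"
    using con r by (auto simp: connected_graph_def)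
  then obtain z where z: "ET r z"
    using \<open>w \<noteq> r\<close> by (cases rule: converse_rtranclpE) auto
  have "P [r, z]"
    using z r edge_in[OF z] irrefl[OF z] by (auto simp: P_def path_in_def nth_Cons split: nat.splits)
  moreover have "length cs < Suc (card VT)" if "P cs" for cs
    using that fin by (metis P_def card_mono distinct_card less_Suc_eq_le path_in_def)
  ultimately obtain cs where cs: "P cs" and longest: "\<And>ds. P ds \<Longrightarrow> length ds \<le> length cs"
    using ex_has_greatest_nat[of P "[r, z]" length "Suc (card VT)"] by metis
  have path: "path_in ET cs" "set cs \<subseteq> VT" "2 \<le> length cs" and ne: "cs \<noteq> []"
    using cs longest[OF \<open>P [r, z]\<close>] by (auto simp: P_def)
  have maximal: "y \<in> set cs" if "ET (last cs) y" for y
  proof (rule ccontr)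
    assume "y \<notin> set cs"
    then have "P (cs @ [y])" using cs that edge_in[OF that] path_in_snoc[OF path(1) ne] by (auto simp: P_def)
    then show False using longest[of "cs @ [y]"] by simp
  qed
  have "last cs \<in> VT" using path(2) ne by auto
  moreover have "last cs \<noteq> r" using cs path(3) by (auto simp: P_def path_in_def hd_conv_nth last_conv_nth nth_eq_iff_index_eq)
  moreover have "ET (last cs) (cs ! (length cs - 2))"
  proof -
    have "ET (cs ! (length cs - 2)) (cs ! Suc (length cs - 2))" using path(1,3) by (simp add: path_in_def)
    moreover have "Suc (length cs - 2) = length cs - 1" using path(3) by simp
    ultimately show ?thesis using sg ne by (simp add: sgraph_def last_conv_nth)
  qed
  ultimately show ?thesis
    using that maximal_path_ends_in_leaf[OF sg acyclic path maximal] by blast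
qed

lemma tree_remove_leaf:
  assumes T: "is_tree VT ET" and l: "l \<in> VT" "ET l p" "\<And>z. ET l z \<Longrightarrow> z = p"
  shows "is_tree (VT - {l}) (\<lambda>a b. ET a b \<and> a \<noteq> l \<and> b \<noteq> l)"
proof -
  have sg: "sgraph VT ET" and con: "connected_graph VT ET" and acyclic: "\<not> has_cycle VT ET"
    using T by (auto simp: is_tree_def)
  have sym: "\<And>a b. ET a b \<Longrightarrow> ET b a" and irrefl: "\<And>a b. ET a b \<Longrightarrow> a \<noteq> b"
    using sg by (auto simp: sgraph_def)
  let ?R = "\<lambda>a b. a \<in> VT \<and> b \<in> VT \<and> ET a b"
  let ?R' = "\<lambda>a b. a \<in> VT - {l} \<and> b \<in> VT - {l} \<and> ET a b \<and> a \<noteq> l \<and> b \<noteq> l"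
  have "?R'\<^sup>*\<^sup>* u w" if u: "u \<in> VT - {l}" and w: "w \<in> VT - {l}" for u w
  proof -
    have "?R\<^sup>*\<^sup>* u w" using con u w by (auto simp: connected_graph_def)
    \<comment> \<open>a walk entering the leaf l must come from p and leave towards p\<close>
    then have "?R'\<^sup>*\<^sup>* u (if w = l then p else w)"
    proof (induction rule: rtranclp_induct)
      case base then show ?case using u by auto
    next
      case (step y z)
      show ?case
      proof (cases "z = l \<or> y = l")
        case True
        then have "(z = l \<and> y = p) \<or> (y = l \<and> z = p)" using step(2) l(3) sym by blast
        then show ?thesis using step(3) irrefl[OF l(2)] by auto
      next
        case False
        then show ?thesis using step by (auto intro: rtranclp.rtrancl_into_rtrancl)
      qed
    qed
    then show ?thesis using w by simp
  qed
  then have "connected_graph (VT - {l}) (\<lambda>a b. ET a b \<and> a \<noteq> l \<and> b \<noteq> l)"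
    by (simp add: connected_graph_def)
  moreover have "sgraph (VT - {l}) (\<lambda>a b. ET a b \<and> a \<noteq> l \<and> b \<noteq> l)"
    using sg by (auto simp: sgraph_def)
  moreover have "\<not> has_cycle (VT - {l}) (\<lambda>a b. ET a b \<and> a \<noteq> l \<and> b \<noteq> l)"
    using acyclic unfolding has_cycle_def by blast
  moreover have "p \<in> VT - {l}" using l(2) irrefl[OF l(2)] sg by (auto simp: sgraph_def)
  ultimately show ?thesis by (auto simp: is_tree_def)
qed

locale rooted_tree =
  fixes VT :: "'b set" and ET :: "'b \<Rightarrow> 'b \<Rightarrow> bool" and r :: 'b
    and par :: "'b \<Rightarrow> 'b" and dep :: "'b \<Rightarrow> nat"
  assumes sgraph: "sgraph VT ET"
    and root_in: "r \<in> VT"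
    and parent_in: "\<lbrakk>y \<in> VT; y \<noteq> r\<rbrakk> \<Longrightarrow> par y \<in> VT"
    and parent_edge: "\<lbrakk>y \<in> VT; y \<noteq> r\<rbrakk> \<Longrightarrow> ET y (par y)"
    and depth_parent: "\<lbrakk>y \<in> VT; y \<noteq> r\<rbrakk> \<Longrightarrow> dep y = Suc (dep (par y))"
    and edge_parent: "ET a b \<Longrightarrow> (a \<noteq> r \<and> par a = b) \<or> (b \<noteq> r \<and> par b = a)"

lemma rooted_tree_add_leaf:
  assumes T': "rooted_tree (VT - {l}) (\<lambda>a b. ET a b \<and> a \<noteq> l \<and> b \<noteq> l) r par dep"
    and sg: "sgraph VT ET" and l: "l \<in> VT" "l \<noteq> r" "ET l p" "\<And>z. ET l z \<Longrightarrow> z = p"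
  shows "rooted_tree VT ET r (par(l := p)) (dep(l := Suc (dep p)))"
proof -
  interpret T': rooted_tree "VT - {l}" "\<lambda>a b. ET a b \<and> a \<noteq> l \<and> b \<noteq> l" r par dep by (fact T')
  have p: "p \<in> VT" "p \<noteq> l" using l(3) sg by (auto simp: sgraph_def)
  show ?thesis
  proof
    show "sgraph VT ET" "r \<in> VT" using sg T'.root_in by auto
    fix y assume y: "y \<in> VT" "y \<noteq> r"
    have "(par(l := p)) y \<in> VT \<and> ET y ((par(l := p)) y) \<and>
      (dep(l := Suc (dep p))) y = Suc ((dep(l := Suc (dep p))) ((par(l := p)) y))"
    proof (cases "y = l")
      case False
      then have "par y \<in> VT - {l}" "ET y (par y)" "dep y = Suc (dep (par y))"
        using y T'.parent_in T'.parent_edge T'.depth_parent by auto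
      then show ?thesis using False by auto
    qed (use l(1,3) p in auto)
    then show "(par(l := p)) y \<in> VT" "ET y ((par(l := p)) y)"
      "(dep(l := Suc (dep p))) y = Suc ((dep(l := Suc (dep p))) ((par(l := p)) y))"
      by auto
  next
    fix a b assume "ET a b"
    then consider "a = l" "b = p" | "b = l" "a = p" | "ET a b" "a \<noteq> l" "b \<noteq> l"
      using l(4) sg by (auto simp: sgraph_def)
    then show "(a \<noteq> r \<and> (par(l := p)) a = b) \<or> (b \<noteq> r \<and> (par(l := p)) b = a)"
    proof cases
      case 3
      then show ?thesis using T'.edge_parent[of a b] by simp
    qed (use l(2) in simp_all)
  qed
qed

lemma tree_has_rooting:
  assumes "is_tree VT ET" "r \<in> VT"
  shows "\<exists>par dep. rooted_tree VT ET r par dep"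
  using assms
proof (induction "card VT" arbitrary: VT ET rule: less_induct)
  case less
  have sg: "sgraph VT ET" and fin: "finite VT" using less.prems by (auto simp: is_tree_def sgraph_def)
  show ?case
  proof (cases "card VT \<ge> 2")
    case False
    then have "card VT \<le> Suc 0" by simp
    then have "VT = {r}" using less.prems(2) card_le_Suc0_iff_eq[OF fin] by blast
    then have "rooted_tree VT ET r id (\<lambda>_. 0)"
      using sg by unfold_locales (auto simp: sgraph_def)
    then show ?thesis by blast
  next
    case True
    obtain l p where l: "l \<in> VT" "l \<noteq> r" "ET l p" "\<And>z. ET l z \<Longrightarrow> z = p"
      using tree_has_leaf[OF less.prems True] by blast
    have "card (VT - {l}) < card VT" using fin l(1) by (rule card_Diff1_less)
    then obtain par dep where "rooted_tree (VT - {l}) (\<lambda>a b. ET a b \<and> a \<noteq> l \<and> b \<noteq> l) r par dep"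
      using less.hyps tree_remove_leaf[OF less.prems(1) l(1,3,4)] less.prems(2) l(2) by blast
    then show ?thesis using rooted_tree_add_leaf[OF _ sg l] by blast
  qed
qed

context rooted_tree
begin

lemma finite_VT: "finite VT"
  using sgraph by (simp add: sgraph_def)

lemma edge_sym: "ET a b \<Longrightarrow> ET b a"
  using sgraph by (simp add: sgraph_def)

lemma edge_in: "ET a b \<Longrightarrow> a \<in> VT \<and> b \<in> VT"
  using sgraph by (simp add: sgraph_def)

lemma edge_irrefl: "ET a b \<Longrightarrow> a \<noteq> b"
  using sgraph by (auto simp: sgraph_def)

lemma even_depth_edge:
  assumes "ET a b"
  shows "even (dep a) \<noteq> even (dep b)"
proof -
  have "a \<in> VT" "b \<in> VT" using edge_in[OF assms] by auto
  with edge_parent[OF assms] show ?thesis by (metis depth_parent even_Suc)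
qed

definition children :: "'b \<Rightarrow> 'b set" where
  "children u = {c \<in> VT. c \<noteq> r \<and> par c = u}"

lemma children_subset_nbrs: "children u \<subseteq> nbrs VT ET u"
  unfolding children_def nbrs_def using parent_edge edge_sym by auto

lemma card_children_le_degree: "card (children u) \<le> degree VT ET u"
  unfolding degree_def using children_subset_nbrs finite_VT by (intro card_mono) (auto simp: nbrs_def)

inductive descendant :: "'b \<Rightarrow> 'b \<Rightarrow> bool" where
  self: "u \<in> VT \<Longrightarrow> descendant u u"
| child: "\<lbrakk>descendant u (par z); z \<in> VT; z \<noteq> r\<rbrakk> \<Longrightarrow> descendant u z"

definition subtree :: "'b \<Rightarrow> 'b set" where
  "subtree u = {y. descendant u y}"

lemma descendant_in: "descendant u y \<Longrightarrow> u \<in> VT \<and> y \<in> VT"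
  by (induction rule: descendant.induct) auto

lemma descendant_depth: "descendant u y \<Longrightarrow> y = u \<or> dep u < dep y"
  by (induction rule: descendant.induct) (auto simp: depth_parent)

lemma descendant_trans: "descendant b c \<Longrightarrow> descendant a b \<Longrightarrow> descendant a c"
  by (induction rule: descendant.induct) (auto intro: descendant.child)

lemma descendant_cases: "descendant u y \<Longrightarrow> y = u \<or> (y \<noteq> r \<and> descendant u (par y))"
  by (cases rule: descendant.cases) auto

lemma descendant_linear: "descendant a y \<Longrightarrow> descendant b y \<Longrightarrow> descendant a b \<or> descendant b a"
proof (induction arbitrary: b rule: descendant.induct)
  case (child u z)
  from descendant_cases[OF child.prems] show ?case
    using child.IH descendant.child[OF child.hyps] by auto
qed simp

lemma descendant_root: "y \<in> VT \<Longrightarrow> descendant r y"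
proof (induction "dep y" arbitrary: y rule: less_induct)
  case less
  show ?case
  proof (cases "y = r")
    case True then show ?thesis using less.prems by (simp add: descendant.self)
  next
    case False
    then have "descendant r (par y)" using less parent_in depth_parent by simp
    then show ?thesis using False less.prems by (simp add: descendant.child)
  qed
qed

lemma subtree_subset: "subtree u \<subseteq> VT"
  unfolding subtree_def using descendant_in by auto

lemma finite_subtree: "finite (subtree u)"
  using subtree_subset finite_VT by (rule finite_subset)

lemma subtree_root: "subtree r = VT"
  using subtree_subset descendant_root unfolding subtree_def by auto

lemma child_descendant:
  assumes "c \<in> children u"
  shows "descendant u c"
proof -
  have c: "c \<in> VT" "c \<noteq> r" "par c = u" using assms by (auto simp: children_def)
  then have "descendant u (par c)" using parent_in descendant.self by metis
  with c show ?thesis by (simp add: descendant.child)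
qed

lemma not_in_child_subtree:
  assumes "c \<in> children u"
  shows "u \<notin> subtree c"
proof
  assume "u \<in> subtree c"
  then have "u = c \<or> dep c < dep u" using descendant_depth by (simp add: subtree_def)
  moreover have "dep c = Suc (dep u)" using assms depth_parent by (auto simp: children_def)
  ultimately show False by auto
qed

lemma children_subtrees_disjoint:
  assumes "c1 \<in> children u" "c2 \<in> children u" "c1 \<noteq> c2"
  shows "subtree c1 \<inter> subtree c2 = {}"
proof -
  have "\<not> descendant c1 c2" if "c1 \<in> children u" "c2 \<in> children u" "c1 \<noteq> c2" for c1 c2
    using that descendant_cases[of c1 c2] not_in_child_subtree[of c1 u]
    by (auto simp: subtree_def children_def)
  then show ?thesis
    using assms descendant_linear unfolding subtree_def by blast
qed

lemma subtree_eq: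
  assumes "u \<in> VT"
  shows "subtree u = insert u (\<Union>c\<in>children u. subtree c)"
proof (intro equalityI subsetI)
  fix y assume "y \<in> subtree u"
  then have "descendant u y" by (simp add: subtree_def)
  then show "y \<in> insert u (\<Union>c\<in>children u. subtree c)"
  proof (induction rule: descendant.induct)
    case (child u z)
    show ?case
    proof (cases "par z = u")
      case True
      then have "z \<in> children u" using child.hyps by (simp add: children_def)
      then show ?thesis using child.hyps(2) by (auto simp: subtree_def intro: descendant.self)
    next
      case False
      then obtain c where "c \<in> children u" "descendant c (par z)"
        using child.IH by (auto simp: subtree_def)
      then show ?thesis using child.hyps(2,3) by (auto simp: subtree_def intro: descendant.child)
    qed
  qed simp
next
  fix y assume "y \<in> insert u (\<Union>c\<in>children u. subtree c)"
  then show "y \<in> subtree u"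
    using assms descendant.self child_descendant descendant_trans by (auto simp: subtree_def)
qed

lemma sum_subtree:
  assumes "u \<in> VT"
  shows "sum f (subtree u) = f u + (\<Sum>c\<in>children u. sum f (subtree c))"
proof -
  have "finite (children u)" using finite_VT by (simp add: children_def)
  moreover have "u \<notin> (\<Union>c\<in>children u. subtree c)" using not_in_child_subtree by blast
  ultimately show ?thesis
    using subtree_eq[OF assms] finite_subtree children_subtrees_disjoint
    by (simp add: sum.UNION_disjoint)
qed

lemma in_child_subtrees_iff_parent:
  assumes "J \<subseteq> children u" "a \<in> VT" "a \<noteq> r" "par a \<noteq> u"
  shows "a \<in> (\<Union>j\<in>J. subtree j) \<longleftrightarrow> par a \<in> (\<Union>j\<in>J. subtree j)"
proof
  assume "a \<in> (\<Union>j\<in>J. subtree j)"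
  then obtain j where j: "j \<in> J" "descendant j a" by (auto simp: subtree_def)
  moreover have "a \<noteq> j" using j assms by (auto simp: children_def)
  ultimately show "par a \<in> (\<Union>j\<in>J. subtree j)"
    using descendant_cases[OF j(2)] by (auto simp: subtree_def)
next
  assume "par a \<in> (\<Union>j\<in>J. subtree j)"
  then show "a \<in> (\<Union>j\<in>J. subtree j)"
    using assms descendant.child by (auto simp: subtree_def)
qed

lemma card_edges: "card (edges VT ET) = card VT - 1"
proof -
  have "edges VT ET = (\<lambda>y. {y, par y}) ` (VT - {r})"
    using edge_parent parent_in parent_edge unfolding edges_def by (fastforce simp: insert_commute)
  moreover have "inj_on (\<lambda>y. {y, par y}) (VT - {r})"
  proof (rule inj_onI)
    fix a b assume "a \<in> VT - {r}" "b \<in> VT - {r}" "{a, par a} = {b, par b}"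
    then show "a = b"
      using depth_parent[of a] depth_parent[of b] by (auto simp: doubleton_eq_iff)
  qed
  ultimately show ?thesis using root_in finite_VT by (simp add: card_image)
qed

lemma card_le_Suc_max_degree:
  assumes max_deg: "max_degree_le VT ET \<Delta>" and "\<Delta> \<le> 1"
  shows "card VT \<le> Suc \<Delta>"
proof (cases "\<exists>y\<in>VT - {r}. par y \<noteq> r")
  case True
  then obtain y where y: "y \<in> VT" "y \<noteq> r" "par y \<noteq> r" by blast
  let ?p = "par y"
  have "y \<noteq> par ?p" using y parent_in depth_parent[of y] depth_parent[of ?p] by auto
  then have "2 = card {y, par ?p}" by simp
  also have "\<dots> \<le> degree VT ET ?p"
    unfolding degree_def using y parent_in parent_edge edge_sym finite_VT
    by (intro card_mono) (auto simp: nbrs_def)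
  also have "\<dots> \<le> \<Delta>" using max_deg y parent_in by (simp add: max_degree_le_def)
  finally show ?thesis using \<open>\<Delta> \<le> 1\<close> by simp
next
  case False
  then have "VT - {r} \<subseteq> children r" by (auto simp: children_def)
  then have "card (VT - {r}) \<le> card (children r)"
    using finite_VT by (intro card_mono) (auto simp: children_def)
  also have "\<dots> \<le> degree VT ET r" by (rule card_children_le_degree)
  also have "\<dots> \<le> \<Delta>" using max_deg root_in by (simp add: max_degree_le_def)
  finally show ?thesis using root_in finite_VT by (simp add: card_Diff_singleton)
qed

lemma card_class_le_max_degree:
  assumes proper: "proper_colouring_on VT ET col" and max_deg: "max_degree_le VT ET \<Delta>"
  shows "card {y\<in>VT. col y} \<le> \<Delta> * card {y\<in>VT. \<not> col y} + 1"
proof -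
  let ?A = "{y\<in>VT. \<not> col y}"
  have "{y\<in>VT. col y} - {r} \<subseteq> (\<Union>a\<in>?A. children a)"
  proof
    fix y assume y: "y \<in> {y\<in>VT. col y} - {r}"
    then have "par y \<in> VT" "col (par y) \<noteq> col y"
      using proper parent_in parent_edge by (auto simp: proper_colouring_on_def)
    then show "y \<in> (\<Union>a\<in>?A. children a)" using y by (auto simp: children_def)
  qed
  then have "card ({y\<in>VT. col y} - {r}) \<le> card (\<Union>a\<in>?A. children a)"
    using finite_VT by (intro card_mono) (auto simp: children_def)
  also have "\<dots> \<le> (\<Sum>a\<in>?A. card (children a))"
    using finite_VT by (intro card_UN_le) auto
  also have "\<dots> \<le> (\<Sum>a\<in>?A. \<Delta>)"
    using card_children_le_degree max_deg by (intro sum_mono) (auto simp: max_degree_le_def intro: le_trans)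
  finally show ?thesis by (simp add: card_Diff_singleton_if mult.commute split: if_splits)
qed

lemma imbalance_children_subtrees:
  assumes "J \<subseteq> children u"
  shows "imbalance c (\<Union>j\<in>J. subtree j) = (\<Sum>j\<in>J. imbalance c (subtree j))"
proof -
  have "finite J" using assms finite_VT by (simp add: children_def finite_subset)
  then show ?thesis
    unfolding imbalance_def using assms finite_subtree children_subtrees_disjoint
    by (subst sum.UNION_disjoint) blast+
qed

lemma recolour_subtrees_proper:
  assumes "proper_colouring_on VT ET col" "J \<subseteq> children u"
  shows "proper_colouring_on (VT - {u}) ET (\<lambda>y. col y \<noteq> (y \<in> (\<Union>j\<in>J. subtree j)))"
  unfolding proper_colouring_on_def
proof (intro ballI impI)
  fix a b assume a: "a \<in> VT - {u}" and b: "b \<in> VT - {u}" and ab: "ET a b"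
  have "(a \<in> (\<Union>j\<in>J. subtree j)) = (b \<in> (\<Union>j\<in>J. subtree j))"
    using edge_parent[OF ab] in_child_subtrees_iff_parent[OF assms(2)] a b by auto
  moreover have "col a \<noteq> col b" using assms(1) a b ab by (simp add: proper_colouring_on_def)
  ultimately show "(col a \<noteq> (a \<in> (\<Union>j\<in>J. subtree j))) \<noteq> (col b \<noteq> (b \<in> (\<Union>j\<in>J. subtree j)))"
    by blast
qed

lemma exists_children_imbalance_between:
  assumes "H + 1 \<le> imbalance c VT" "0 \<le> H" "L \<le> H" "2 * L - 2 \<le> H"
  obtains u J where "u \<in> VT" "J \<subseteq> children u"
    "L \<le> imbalance c (\<Union>j\<in>J. subtree j)" "imbalance c (\<Union>j\<in>J. subtree j) \<le> H"
proof -
  define D where "D w = imbalance c (subtree w)" for w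
  have "\<forall>w. w \<in> VT \<and> H + 1 \<le> D w \<longrightarrow> dep w < Suc (Max (dep ` VT))"
    using finite_VT by (simp add: less_Suc_eq_le)
  moreover have "r \<in> VT \<and> H + 1 \<le> D r" using assms(1) root_in by (simp add: D_def subtree_root)
  ultimately obtain u where u: "u \<in> VT" "H + 1 \<le> D u"
    and deepest: "\<And>w. w \<in> VT \<and> H + 1 \<le> D w \<Longrightarrow> dep w \<le> dep u"
    using ex_has_greatest_nat[of "\<lambda>w. w \<in> VT \<and> H + 1 \<le> D w" r dep] by metis
  have fin: "finite (children u)" using finite_VT by (simp add: children_def)
  have small: "\<forall>j\<in>children u. D j \<le> H"
    using deepest depth_parent by (force simp: children_def)
  have "D u = (if c u then 1 else -1) + (\<Sum>j\<in>children u. D j)"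
    unfolding D_def imbalance_def by (simp add: sum_subtree[OF u(1)])
  then have "H \<le> (\<Sum>j\<in>children u. D j)" using u(2) by (simp split: if_splits)
  also have "\<dots> \<le> (\<Sum>j\<in>children u. if 0 < D j then D j else 0)" by (rule sum_mono) simp
  also have "\<dots> = sum D {j\<in>children u. 0 < D j}" using fin by (simp add: sum.inter_filter)
  finally obtain J where "J \<subseteq> children u" "L \<le> sum D J" "sum D J \<le> H"
    using exists_subset_sum_between[OF fin small assms(2,4)] assms(3) by auto
  then show ?thesis
    using that[OF u(1)] imbalance_children_subtrees by (simp add: D_def)
qed

lemma exists_split_vertex_majority:
  assumes proper: "proper_colouring_on VT ET col" and max_deg: "max_degree_le VT ET \<Delta>"
    and \<Delta>: "2 \<le> \<Delta>" and card_VT: "card VT = k + 1" and k: "6 * \<Delta> < k"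
    and d: "4 * \<Delta> * k \<le> 6 * \<Delta> * d + k"
    and majority: "card {y\<in>VT. \<not> col y} \<le> card {y\<in>VT. col y}"
  shows "\<exists>v\<in>VT. \<exists>c. proper_colouring_on (VT - {v}) ET c \<and>
           card {y\<in>VT. c y} \<le> d \<and> card {y\<in>VT. \<not> c y} \<le> d"
proof -
  define nB where "nB = int (card {y\<in>VT. col y})"
  define nA where "nA = int (card {y\<in>VT. \<not> col y})"
  have n: "nA + nB = int k + 1"
    using card_class_partition[OF finite_VT, of col] card_VT by (simp add: nA_def nB_def)
  have "int (card {y\<in>VT. col y}) \<le> int (\<Delta> * card {y\<in>VT. \<not> col y} + 1)"
    using card_class_le_max_degree[OF proper max_deg] by (simp only: of_nat_le_iff)
  then have "nB - 1 \<le> int \<Delta> * nA" by (simp add: nA_def nB_def)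
  moreover have "int (4 * \<Delta> * k) \<le> int (6 * \<Delta> * d + k)" "int (6 * \<Delta>) < int k"
    using d k by (simp_all only: of_nat_le_iff of_nat_less_iff)
  ultimately have bounds: "int k + 1 \<le> 2 * int d" "2 * nB + nA - 2 \<le> 3 * int d"
    using split_bounds_arith[of "int \<Delta>" nA nB "int k" "int d"] \<Delta> n by (simp_all add: nA_def)
  show ?thesis
  proof (cases "nB \<le> int d")
    case True
    then show ?thesis
      using majority proper_colouring_on_subset[OF proper, of "VT - {r}"] root_in
      by (intro bexI[of _ r] exI[of _ col]) (auto simp: nA_def nB_def)
  next
    case False
    have "imbalance col VT = nB - nA" using finite_VT by (simp add: imbalance_eq_card nA_def nB_def)
    then obtain u J where u: "u \<in> VT" and J: "J \<subseteq> children u"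
      and imb: "nB - int d \<le> imbalance col (\<Union>j\<in>J. subtree j)"
        "imbalance col (\<Union>j\<in>J. subtree j) \<le> int d - nA"
      using exists_children_imbalance_between[of "int d - nA" col "nB - int d"] False bounds n
      by (auto simp: nA_def nB_def)
    define U where "U = (\<Union>j\<in>J. subtree j)"
    define c where "c y \<longleftrightarrow> col y \<noteq> (y \<in> U)" for y
    have U: "U \<subseteq> VT" using subtree_subset by (auto simp: U_def)
    have "int (card {y\<in>VT. c y}) = nB - imbalance col U"
      using card_recolour[OF finite_VT U, of col] by (simp add: c_def nB_def)
    moreover have "int (card {y\<in>VT. \<not> c y}) = nA + imbalance col U"
      using card_recolour[OF finite_VT U, of "\<lambda>y. \<not> col y"] by (simp add: c_def nA_def imbalance_not)
    ultimately have "card {y\<in>VT. c y} \<le> d" "card {y\<in>VT. \<not> c y} \<le> d"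
      using imb unfolding U_def by linarith+
    moreover have "proper_colouring_on (VT - {u}) ET c"
      using recolour_subtrees_proper[OF proper J] by (simp only: c_def[abs_def] U_def)
    ultimately show ?thesis using u by blast
  qed
qed

lemma exists_split_vertex:
  assumes proper: "proper_colouring_on VT ET col" and max_deg: "max_degree_le VT ET \<Delta>"
    and "2 \<le> \<Delta>" "card VT = k + 1" "6 * \<Delta> < k" "4 * \<Delta> * k \<le> 6 * \<Delta> * d + k"
  shows "\<exists>v\<in>VT. \<exists>c. proper_colouring_on (VT - {v}) ET c \<and>
           card {y\<in>VT - {v}. c y} \<le> d \<and> card {y\<in>VT - {v}. \<not> c y} \<le> d"
proof -
  obtain v c where "v \<in> VT" and "proper_colouring_on (VT - {v}) ET c"
    and classes: "card {y\<in>VT. c y} \<le> d" "card {y\<in>VT. \<not> c y} \<le> d"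
  proof (cases "card {y\<in>VT. \<not> col y} \<le> card {y\<in>VT. col y}")
    case True
    then show ?thesis using exists_split_vertex_majority[OF proper max_deg assms(3-6)] that by blast
  next
    case False
    have "proper_colouring_on VT ET (\<lambda>y. \<not> col y)"
      using proper by (auto simp: proper_colouring_on_def)
    moreover have "card {y\<in>VT. \<not> \<not> col y} \<le> card {y\<in>VT. \<not> col y}" using False by simp
    ultimately show ?thesis using exists_split_vertex_majority[OF _ max_deg assms(3-6)] that by blast
  qed
  have mono: "card {y\<in>VT - {v}. P y} \<le> card {y\<in>VT. P y}" for P
    using finite_VT by (intro card_mono) auto
  show ?thesis
    using \<open>v \<in> VT\<close> \<open>proper_colouring_on (VT - {v}) ET c\<close>
      order_trans[OF mono classes(1)] order_trans[OF mono classes(2)] by blast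
qed

end

locale greedy_embedding = rooted_tree VT ET r par dep
  for VT :: "'b set" and ET r par dep +
  fixes V :: "'a set" and E x Y1 Y2 and c :: "'b \<Rightarrow> bool" and d :: nat
  assumes host: "sgraph V E" and x_in: "x \<in> V" and parts: "bipartite_parts (V - {x}) E Y1 Y2"
    and root_degree: "degree VT ET r \<le> card (nbrs Y1 E x)" "degree VT ET r \<le> card (nbrs Y2 E x)"
    and colouring: "proper_colouring_on (VT - {r}) ET c"
    and class_size: "card {y\<in>VT - {r}. c y} \<le> d" "card {y\<in>VT - {r}. \<not> c y} \<le> d"
    and min_degree: "\<And>w. w \<in> V - {x} \<Longrightarrow> d \<le> degree (V - {x}) E w"
begin

definition part :: "bool \<Rightarrow> 'a set" where
  "part b = (if b then Y1 else Y2)"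

lemma part_subset: "part b \<subseteq> V - {x}"
  using parts by (auto simp: part_def bipartite_parts_def)

lemma part_disjoint: "part b \<inter> part (\<not> b) = {}"
  using parts by (auto simp: part_def bipartite_parts_def)

lemma part_nbr:
  assumes "w \<in> part b" "w' \<in> V - {x}" "E w w'"
  shows "w' \<in> part (\<not> b)"
proof -
  have "Y1 \<union> Y2 = V - {x}" "\<forall>u\<in>Y1. \<forall>v\<in>Y1. \<not> E u v" "\<forall>u\<in>Y2. \<forall>v\<in>Y2. \<not> E u v"
    using parts by (auto simp: bipartite_parts_def)
  then show ?thesis using assms by (cases b) (auto simp: part_def)
qed

lemma host_sym: "E a b \<Longrightarrow> E b a"
  using host by (simp add: sgraph_def)

definition partial_embedding :: "'b set \<Rightarrow> ('b \<Rightarrow> 'a) \<Rightarrow> bool" where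
  "partial_embedding W f \<longleftrightarrow> insert r (children r) \<subseteq> W \<and> W \<subseteq> VT \<and> (\<forall>y\<in>W - {r}. par y \<in> W) \<and>
     inj_on f W \<and> f r = x \<and> (\<forall>y\<in>W - {r}. f y \<in> part (c y)) \<and>
     (\<forall>a\<in>W. \<forall>b\<in>W. ET a b \<longrightarrow> E (f a) (f b))"

lemma partial_embedding_star: "\<exists>f. partial_embedding (insert r (children r)) f"
proof -
  have "finite (children r)" using finite_VT by (simp add: children_def)
  moreover have "finite (nbrs (part b) E x)" for b
    using host part_subset finite_subset by (fastforce simp: sgraph_def nbrs_def)
  moreover have "card (children r) \<le> card (nbrs (part b) E x)" for b
    using card_children_le_degree[of r] root_degree by (auto simp: part_def)
  moreover have "nbrs (part True) E x \<inter> nbrs (part False) E x = {}"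
    using part_disjoint[of True] by (auto simp: nbrs_def)
  ultimately obtain g where g: "inj_on g (children r)"
    and g_part: "\<And>y. y \<in> children r \<Longrightarrow> g y \<in> nbrs (part (c y)) E x"
    using exists_inj_into_parts[of "children r" "nbrs (part True) E x" "nbrs (part False) E x" c]
    by (metis (full_types))
  have r_child: "r \<notin> children r" by (simp add: children_def)
  have x_notin: "x \<notin> part b" for b using part_subset by blast
  have "inj_on (g(r := x)) (insert r (children r))"
    using g g_part x_notin r_child by (auto simp: inj_on_def nbrs_def)
  moreover have "E ((g(r := x)) a) ((g(r := x)) b)"
    if "a \<in> insert r (children r)" "b \<in> insert r (children r)" "ET a b" for a b
  proof -
    have "a = r \<or> b = r"
      using that edge_parent[OF that(3)] by (auto simp: children_def)
    moreover have "a \<noteq> b" using edge_irrefl[OF that(3)] .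
    ultimately have "(a = r \<and> b \<in> children r) \<or> (b = r \<and> a \<in> children r)" using that(1,2) by blast
    then show ?thesis
    proof
      assume "a = r \<and> b \<in> children r"
      then show ?thesis using g_part[of b] r_child by (auto simp: nbrs_def)
    next
      assume "b = r \<and> a \<in> children r"
      then show ?thesis using g_part[of a] r_child host_sym by (auto simp: nbrs_def)
    qed
  qed
  ultimately have "partial_embedding (insert r (children r)) (g(r := x))"
    using g_part root_in r_child by (auto simp: partial_embedding_def nbrs_def children_def)
  then show ?thesis by blast
qed

lemma exists_free_neighbour:
  assumes emb: "partial_embedding W f" and y: "y \<in> VT - W" "y \<noteq> r" and p: "par y \<in> W" "par y \<noteq> r"
  shows "\<exists>w. E (f (par y)) w \<and> w \<in> part (c y) \<and> w \<notin> f ` W"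
proof -
  let ?p = "par y"
  let ?N = "nbrs (V - {x}) E (f ?p)"
  let ?used = "{z\<in>W - {r}. c z = c y}"
  have W: "W \<subseteq> VT" "inj_on f W" "f r = x" "\<forall>z\<in>W - {r}. f z \<in> part (c z)"
    using emb by (auto simp: partial_embedding_def)
  have fp: "f ?p \<in> part (c ?p)" using W(4) p by blast
  have "c ?p \<noteq> c y"
    using colouring parent_edge[of y] parent_in[of y] y p W(1)
    by (auto simp: proper_colouring_on_def)
  then have N_part: "?N \<subseteq> part (c y)"
    using part_nbr[OF fp] by (auto simp: nbrs_def)
  have "finite {z\<in>VT - {r}. c z = c y}" using finite_VT by simp
  moreover have "?used \<subset> {z\<in>VT - {r}. c z = c y}" using W(1) y by auto
  ultimately have "card ?used < card {z\<in>VT - {r}. c z = c y}" by (rule psubset_card_mono)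
  also have "\<dots> \<le> d" using class_size by (cases "c y") simp_all
  also have "\<dots> \<le> card ?N" using min_degree fp part_subset by (auto simp: degree_def)
  finally have "card (f ` ?used) < card ?N"
    using card_image_le[of ?used f] finite_subset[OF W(1) finite_VT] by simp
  moreover have "finite (f ` ?used)" using finite_subset[OF W(1) finite_VT] by simp
  ultimately have "\<not> ?N \<subseteq> f ` ?used" using card_mono[of "f ` ?used" ?N] by linarith
  then obtain w where w: "w \<in> ?N" "w \<notin> f ` ?used" by blast
  have "w \<notin> f ` W"
  proof
    assume "w \<in> f ` W"
    then obtain z where z: "z \<in> W" "f z = w" by blast
    have "w \<in> part (c y)" using w(1) N_part by blast
    then have "z \<noteq> r" using z W(3) part_subset by blast
    then have "f z \<in> part (c z)" using W(4) z by blast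
    then have "c z = c y" using part_disjoint[of "c y"] \<open>w \<in> part (c y)\<close> z by (cases "c z = c y") auto
    then show False using w(2) z \<open>z \<noteq> r\<close> by blast
  qed
  then show ?thesis using w N_part by (auto simp: nbrs_def)
qed

lemma partial_embedding_insert:
  assumes emb: "partial_embedding W f" and y: "y \<in> VT - W" "y \<noteq> r" "par y \<in> W"
    and w: "E (f (par y)) w" "w \<in> part (c y)" "w \<notin> f ` W"
  shows "partial_embedding (insert y W) (f(y := w))"
proof -
  have W: "insert r (children r) \<subseteq> W" "W \<subseteq> VT" "\<forall>z\<in>W - {r}. par z \<in> W" "inj_on f W" "f r = x"
    "\<forall>z\<in>W - {r}. f z \<in> part (c z)" "\<forall>a\<in>W. \<forall>b\<in>W. ET a b \<longrightarrow> E (f a) (f b)"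
    using emb by (auto simp: partial_embedding_def)
  have y_nbr: "z = par y" if "z \<in> W" "ET y z" for z
    using edge_parent[OF that(2)] W(3) that(1) y(1) by auto
  have "E ((f(y := w)) a) ((f(y := w)) b)"
    if a: "a \<in> insert y W" and b: "b \<in> insert y W" and ab: "ET a b" for a b
  proof -
    consider "a = y" "b \<in> W" | "b = y" "a \<in> W" | "a \<in> W" "b \<in> W" "a \<noteq> y" "b \<noteq> y"
      using a b edge_irrefl[OF ab] by auto
    then show ?thesis
    proof cases
      case 1
      then show ?thesis using y_nbr[of b] ab w(1) host_sym y(1) by auto
    next
      case 2
      then show ?thesis using y_nbr[of a] edge_sym[OF ab] w(1) y(1) by auto
    qed (use W(7) ab in auto)
  qed
  moreover have "inj_on (f(y := w)) (insert y W)"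
  proof -
    have "y \<notin> W" using y(1) by blast
    then have "inj_on (f(y := w)) W" "(f(y := w)) y \<notin> (f(y := w)) ` W"
      using W(4) w(3) by (auto simp: inj_on_def)
    then show ?thesis by (simp only: inj_on_insert) (use \<open>y \<notin> W\<close> in simp)
  qed
  ultimately show ?thesis
    using W y w(2) unfolding partial_embedding_def by auto
qed

lemma partial_embedding_extend:
  assumes emb: "partial_embedding W f" and "W \<noteq> VT"
  shows "\<exists>y f'. y \<in> VT - W \<and> partial_embedding (insert y W) f'"
proof -
  have W: "insert r (children r) \<subseteq> W" "W \<subseteq> VT" using emb by (auto simp: partial_embedding_def)
  obtain y0 where "y0 \<in> VT - W" using W(2) assms(2) by blast
  then obtain y where y: "y \<in> VT - W" and shallowest: "\<And>z. z \<in> VT - W \<Longrightarrow> dep y \<le> dep z"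
    using ex_has_least_nat[of "\<lambda>z. z \<in> VT - W" y0 dep] by blast
  have "y \<noteq> r" using y W(1) by blast
  then have "par y \<in> W" using shallowest[of "par y"] depth_parent[of y] parent_in[of y] y by force
  moreover have "par y \<noteq> r" using y W(1) \<open>y \<noteq> r\<close> by (auto simp: children_def)
  ultimately obtain w where "E (f (par y)) w" "w \<in> part (c y)" "w \<notin> f ` W"
    using exists_free_neighbour[OF emb y \<open>y \<noteq> r\<close>] by blast
  then show ?thesis
    using partial_embedding_insert[OF emb y \<open>y \<noteq> r\<close> \<open>par y \<in> W\<close>] y by blast
qed

lemma partial_embedding_total: "\<exists>f. partial_embedding VT f"
proof -
  have "\<exists>f. partial_embedding VT f" if "partial_embedding W f" for W f
    using that
  proof (induction "card (VT - W)" arbitrary: W f rule: less_induct)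
    case less
    show ?case
    proof (cases "W = VT")
      case False
      then obtain y f' where y: "y \<in> VT - W" and emb: "partial_embedding (insert y W) f'"
        using partial_embedding_extend[OF less.prems] by blast
      have "card (VT - insert y W) < card (VT - W)"
        using y finite_VT by (metis Diff_insert card_Diff1_less finite_Diff)
      then show ?thesis using less.hyps emb by blast
    qed (use less.prems in blast)
  qed
  then show ?thesis using partial_embedding_star by blast
qed

theorem contains_copy: "contains_copy V E VT ET"
proof -
  obtain f where f: "partial_embedding VT f" using partial_embedding_total by blast
  then have "f ` VT \<subseteq> V" using x_in part_subset by (fastforce simp: partial_embedding_def)
  then show ?thesis using f by (auto simp: contains_copy_def partial_embedding_def)
qed

end

theorem lemma7p4:
  fixes V :: "'a set" and E :: "'a \<Rightarrow> 'a \<Rightarrow> bool" and x :: 'a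
    and Y1 Y2 :: "'a set" and \<Delta> k :: nat
  assumes "k > 6 * \<Delta>"
    and "sgraph V E"
    and "x \<in> V"
    and "\<forall>v \<in> V - {x}. real (degree (V - {x}) E v) \<ge> (2/3 - 1 / (6 * real \<Delta>)) * real k"
    and "bipartite_parts (V - {x}) E Y1 Y2"
    and "card (nbrs Y1 E x) \<ge> \<Delta>"
    and "card (nbrs Y2 E x) \<ge> \<Delta>"
  shows "\<forall>(VT :: 'b set) ET. is_tree VT ET \<and> card (edges VT ET) = k \<and> max_degree_le VT ET \<Delta>
           \<longrightarrow> contains_copy V E VT ET"
proof (intro allI impI, elim conjE)
  fix VT :: "'b set" and ET
  assume tree: "is_tree VT ET" and k_edges: "card (edges VT ET) = k" and max_deg: "max_degree_le VT ET \<Delta>"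
  obtain r where "r \<in> VT" using tree by (auto simp: is_tree_def)
  then obtain par dep where "rooted_tree VT ET r par dep" using tree_has_rooting[OF tree] by blast
  then interpret T: rooted_tree VT ET r par dep .
  have "0 < card VT" using T.root_in T.finite_VT card_gt_0_iff by blast
  then have card_VT: "card VT = k + 1" using T.card_edges k_edges by simp
  have "2 \<le> \<Delta>" using T.card_le_Suc_max_degree[OF max_deg] card_VT assms(1) by fastforce
  define d where "d = nat \<lceil>(2/3 - 1 / (6 * real \<Delta>)) * real k\<rceil>"
  have "4 * \<Delta> * k \<le> 6 * \<Delta> * d + k" using threshold_arith[of \<Delta> k] \<open>2 \<le> \<Delta>\<close> by (simp add: d_def)
  moreover have "proper_colouring_on VT ET (\<lambda>y. even (dep y))"
    using T.even_depth_edge by (auto simp: proper_colouring_on_def)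
  ultimately obtain v c where v: "v \<in> VT" and c: "proper_colouring_on (VT - {v}) ET c"
    "card {y\<in>VT - {v}. c y} \<le> d" "card {y\<in>VT - {v}. \<not> c y} \<le> d"
    using T.exists_split_vertex[OF _ max_deg \<open>2 \<le> \<Delta>\<close> card_VT assms(1)] by blast
  obtain par' dep' where "rooted_tree VT ET v par' dep'" using tree_has_rooting[OF tree v] by blast
  moreover have "degree VT ET v \<le> \<Delta>" using max_deg v by (simp add: max_degree_le_def)
  moreover have "\<And>w. w \<in> V - {x} \<Longrightarrow> d \<le> degree (V - {x}) E w" using assms(4) by (simp add: d_def)
  ultimately have "greedy_embedding VT ET v par' dep' V E x Y1 Y2 c d"
    using assms(2,3,5-7) c unfolding greedy_embedding_def greedy_embedding_axioms_def
    by (auto intro: le_trans)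
  then show "contains_copy V E VT ET" by (rule greedy_embedding.contains_copy)
qed

end
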